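(* Let $I,J\subset[n]$ be nonempty with $I\cup J=[n]$ and $I\cap J=\emptyset$, and let $x,a\in(\mathbb{R}\cup\{-\infty\})^n$, neither identically $-\infty$. Then $$\operatorname{dist}_H(x,\mathcal H^{IJ}_a)=\Big|\max_{i\in I}(x_i+a_i)-\max_{j\in J}(x_j+a_j)\Big|$$ if at least one of these two maxima is finite, and $\operatorname{dist}_H(x,\mathcal H^{IJ}_a)=0$ otherwise.
   Context: $-\infty+c=-\infty$; $|\pm\infty|=+\infty$. The signed tropical hyperplane of type $(I,J)$ is $\mathcal H^{IJ}_a=\{y\in(\mathbb{R}\cup\{-\infty\})^n:\max_{i\in I}(a_i+y_i)=\max_{j\in J}(a_j+y_j)\}$. Hilbert's projective metric: $d(x,y)=\inf\{\lambda-\mu:\lambda,\mu\in\mathbb{R},\ \mu+y_l\le x_l\le\lambda+y_l\ \forall l\}\in[0,+\infty]$ (and $d(\bot,\bot)=0$); $\operatorname{dist}_H(x,B)=\inf_{y\in B}d(x,y)$. *)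

theory Defs
  imports "HOL-Analysis.Analysis"
begin

text \<open>Points of (R \<union> {-\<infinity>})^n are represented as functions nat \<Rightarrow> ereal whose
  coordinates 1..n are never +\<infinity>; coordinates outside {1..n} are irrelevant.\<close>

definition tpoints :: "nat \<Rightarrow> (nat \<Rightarrow> ereal) set" where
  "tpoints n = {y. \<forall>l\<in>{1..n}. y l \<noteq> \<infinity>}"

definition is_bot :: "nat \<Rightarrow> (nat \<Rightarrow> ereal) \<Rightarrow> bool" where
  "is_bot n y \<longleftrightarrow> (\<forall>l\<in>{1..n}. y l = -\<infinity>)"

definition signed_hyperplane ::
  "nat \<Rightarrow> nat set \<Rightarrow> nat set \<Rightarrow> (nat \<Rightarrow> ereal) \<Rightarrow> (nat \<Rightarrow> ereal) set" where
  "signed_hyperplane n I J a =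
     {y \<in> tpoints n. Max ((\<lambda>i. a i + y i) ` I) = Max ((\<lambda>j. a j + y j) ` J)}"

text \<open>Hilbert's projective metric, with values in [0,+\<infinity>] (Inf of the empty set is +\<infinity>),
  and d(bot,bot) = 0.\<close>
definition hilbert_dist :: "nat \<Rightarrow> (nat \<Rightarrow> ereal) \<Rightarrow> (nat \<Rightarrow> ereal) \<Rightarrow> ereal" where
  "hilbert_dist n x y =
     (if is_bot n x \<and> is_bot n y then 0
      else Inf {ereal (lam - mu) | lam mu.
                 \<forall>l\<in>{1..n}. ereal mu + y l \<le> x l \<and> x l \<le> ereal lam + y l})"

definition hilbert_setdist :: "nat \<Rightarrow> (nat \<Rightarrow> ereal) \<Rightarrow> (nat \<Rightarrow> ereal) set \<Rightarrow> ereal" where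
  "hilbert_setdist n x B = (INF y\<in>B. hilbert_dist n x y)"

end

theory Submission
  imports Defs
begin

text \<open>Write \<open>M\<^sub>I(x) = max\<^sub>i\<^sub>\<in>\<^sub>I (x\<^sub>i + a\<^sub>i)\<close> and \<open>M\<^sub>J(x)\<close> likewise. If \<open>\<mu> + y \<le> x \<le> \<lambda> + y\<close>
  coordinatewise for a point \<open>y\<close> of the hyperplane, whose two maxima share a value \<open>c\<close>,
  then both \<open>M\<^sub>I(x)\<close> and \<open>M\<^sub>J(x)\<close> lie in \<open>[\<mu> + c, \<lambda> + c]\<close>, so \<open>|M\<^sub>I(x) - M\<^sub>J(x)| \<le> \<lambda> - \<mu>\<close>.
  Conversely, if say \<open>M\<^sub>J(x) \<le> M\<^sub>I(x)\<close> are finite, lowering the \<open>I\<close>-coordinates of \<open>x\<close> by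
  \<open>M\<^sub>I(x) - M\<^sub>J(x)\<close> lands on the hyperplane at exactly that distance. If exactly one
  maximum is \<open>-\<infinity>\<close>, the first argument shows that no point of the hyperplane is at finite
  distance; if both are, \<open>x\<close> itself lies on the hyperplane.\<close>

lemma Max_image_mono:
  fixes f g :: "'a \<Rightarrow> 'b::linorder"
  assumes "finite A" "A \<noteq> {}" "\<And>i. i \<in> A \<Longrightarrow> f i \<le> g i"
  shows "Max (f ` A) \<le> Max (g ` A)"
proof -
  have "f i \<le> Max (g ` A)" if "i \<in> A" for i
    using assms(3)[OF that] Max_ge[OF finite_imageI[OF assms(1)] imageI[OF that]] by (rule order_trans)
  then show ?thesis using assms(1,2) by simp
qed

lemma Max_image_add_ereal:
  fixes g :: "'a \<Rightarrow> ereal"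
  assumes "finite A" "A \<noteq> {}"
  shows "Max ((\<lambda>i. c + g i) ` A) = c + Max (g ` A)"
proof -
  have "mono (\<lambda>z::ereal. c + z)" by (auto simp: mono_def intro: add_left_mono)
  then show ?thesis
    using mono_Max_commute[of "\<lambda>z. c + z" "g ` A"] assms by (simp add: image_image)
qed

lemma Max_image_between:
  fixes x y a :: "'a \<Rightarrow> ereal"
  assumes "finite A" "A \<noteq> {}" "\<forall>i\<in>A. ereal mu + y i \<le> x i \<and> x i \<le> ereal lam + y i"
  shows "ereal mu + Max ((\<lambda>i. a i + y i) ` A) \<le> Max ((\<lambda>i. x i + a i) ` A)"
    and "Max ((\<lambda>i. x i + a i) ` A) \<le> ereal lam + Max ((\<lambda>i. a i + y i) ` A)"
proof -
  have lower: "ereal mu + (a i + y i) \<le> x i + a i"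
    and upper: "x i + a i \<le> ereal lam + (a i + y i)" if "i \<in> A" for i
    using add_right_mono[of _ _ "a i", OF conjunct1[OF bspec[OF assms(3) that]]]
      add_right_mono[of _ _ "a i", OF conjunct2[OF bspec[OF assms(3) that]]]
    by (simp_all add: ac_simps)
  note shift = Max_image_add_ereal[OF assms(1,2), symmetric]
  show "ereal mu + Max ((\<lambda>i. a i + y i) ` A) \<le> Max ((\<lambda>i. x i + a i) ` A)"
    unfolding shift by (rule Max_image_mono[OF assms(1,2) lower])
  show "Max ((\<lambda>i. x i + a i) ` A) \<le> ereal lam + Max ((\<lambda>i. a i + y i) ` A)"
    unfolding shift by (rule Max_image_mono[OF assms(1,2) upper])
qed

lemma ereal_abs_diff_le_of_between:
  fixes u v c :: ereal
  assumes "ereal mu + c \<le> u" "u \<le> ereal lam + c" "ereal mu + c \<le> v" "v \<le> ereal lam + c"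
    and "u \<noteq> \<infinity>" and "u \<noteq> -\<infinity> \<or> v \<noteq> -\<infinity>"
  shows "\<bar>u - v\<bar> \<le> ereal (lam - mu)"
  using assms by (cases u; cases v; cases c) auto

lemma Max_add_tpoints_neq_PInfty:
  fixes x a :: "nat \<Rightarrow> ereal"
  assumes "x \<in> tpoints n" "a \<in> tpoints n" "A \<subseteq> {1..n}" "A \<noteq> {}"
  shows "Max ((\<lambda>i. x i + a i) ` A) \<noteq> \<infinity>"
proof -
  have "finite A" using assms(3) finite_subset by blast
  then have "Max ((\<lambda>i. x i + a i) ` A) \<in> (\<lambda>i. x i + a i) ` A"
    using assms(4) by (intro Max_in) auto
  then obtain i where "i \<in> A" "Max ((\<lambda>i. x i + a i) ` A) = x i + a i" by blast
  with assms(1-3) show ?thesis unfolding tpoints_def by auto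
qed

lemma hilbert_dist_le:
  assumes "\<not> is_bot n x" "\<forall>l\<in>{1..n}. ereal mu + y l \<le> x l \<and> x l \<le> ereal lam + y l"
  shows "hilbert_dist n x y \<le> ereal (lam - mu)"
  using assms unfolding hilbert_dist_def by (auto intro!: Inf_lower)

lemma hilbert_dist_ge:
  assumes "\<not> is_bot n x"
    and "\<And>lam mu. \<forall>l\<in>{1..n}. ereal mu + y l \<le> x l \<and> x l \<le> ereal lam + y l
           \<Longrightarrow> t \<le> ereal (lam - mu)"
  shows "t \<le> hilbert_dist n x y"
  using assms unfolding hilbert_dist_def by (auto intro!: Inf_greatest)

lemma hilbert_dist_nonneg:
  assumes "x \<in> tpoints n" "\<not> is_bot n x"
  shows "0 \<le> hilbert_dist n x y"
proof (rule hilbert_dist_ge[OF assms(2)])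
  fix lam mu
  assume between: "\<forall>l\<in>{1..n}. ereal mu + y l \<le> x l \<and> x l \<le> ereal lam + y l"
  obtain l where l: "l \<in> {1..n}" "x l \<noteq> -\<infinity>" "x l \<noteq> \<infinity>"
    using assms unfolding is_bot_def tpoints_def by auto
  with bspec[OF between l(1)] have "mu \<le> lam" by (cases "x l"; cases "y l") auto
  then show "0 \<le> ereal (lam - mu)" by simp
qed

lemma hilbert_dist_self:
  assumes "x \<in> tpoints n"
  shows "hilbert_dist n x x = 0"
proof (cases "is_bot n x")
  case False
  have "hilbert_dist n x x \<le> ereal (0 - 0)" by (rule hilbert_dist_le[OF False]) auto
  with hilbert_dist_nonneg[OF assms False] show ?thesis by (metis antisym diff_self zero_ereal_def)
qed (simp add: hilbert_dist_def)

lemma hilbert_setdist_eq_0_of_mem: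
  assumes "x \<in> B" "x \<in> tpoints n" "\<not> is_bot n x"
  shows "hilbert_setdist n x B = 0"
proof (rule antisym)
  show "hilbert_setdist n x B \<le> 0"
    unfolding hilbert_setdist_def by (metis INF_lower assms(1,2) hilbert_dist_self)
  show "0 \<le> hilbert_setdist n x B"
    unfolding hilbert_setdist_def by (intro INF_greatest hilbert_dist_nonneg assms(2,3))
qed

lemma signed_hyperplane_swap: "signed_hyperplane n I J a = signed_hyperplane n J I a"
  unfolding signed_hyperplane_def by auto

lemma hilbert_setdist_signed_hyperplane_ge:
  fixes x a :: "nat \<Rightarrow> ereal"
  assumes "I \<noteq> {}" "J \<noteq> {}" "I \<union> J = {1..n}"
    and "x \<in> tpoints n" "a \<in> tpoints n" "\<not> is_bot n x"
    and "Max ((\<lambda>i. x i + a i) ` I) \<noteq> -\<infinity> \<or> Max ((\<lambda>j. x j + a j) ` J) \<noteq> -\<infinity>"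
  shows "\<bar>Max ((\<lambda>i. x i + a i) ` I) - Max ((\<lambda>j. x j + a j) ` J)\<bar>
           \<le> hilbert_setdist n x (signed_hyperplane n I J a)"
  unfolding hilbert_setdist_def
proof (intro INF_greatest hilbert_dist_ge[OF assms(6)])
  fix y lam mu
  assume y: "y \<in> signed_hyperplane n I J a"
    and between: "\<forall>l\<in>{1..n}. ereal mu + y l \<le> x l \<and> x l \<le> ereal lam + y l"
  have fin: "finite I" "finite J" using assms(3) by (metis finite_Un finite_atLeastAtMost)+
  define c where "c = Max ((\<lambda>i. a i + y i) ` I)"
  have c_J: "c = Max ((\<lambda>j. a j + y j) ` J)" using y unfolding c_def signed_hyperplane_def by simp
  have "I \<subseteq> {1..n}" "J \<subseteq> {1..n}" using assms(3) by blast+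
  then have between_I: "\<forall>i\<in>I. ereal mu + y i \<le> x i \<and> x i \<le> ereal lam + y i"
    and between_J: "\<forall>j\<in>J. ereal mu + y j \<le> x j \<and> x j \<le> ereal lam + y j"
    using between by blast+
  note I_between = Max_image_between[OF fin(1) assms(1) between_I, where a=a, folded c_def]
  note J_between = Max_image_between[OF fin(2) assms(2) between_J, where a=a, folded c_J]
  show "\<bar>Max ((\<lambda>i. x i + a i) ` I) - Max ((\<lambda>j. x j + a j) ` J)\<bar> \<le> ereal (lam - mu)"
    by (intro ereal_abs_diff_le_of_between[OF I_between J_between]
        Max_add_tpoints_neq_PInfty[OF assms(4,5) \<open>I \<subseteq> {1..n}\<close> assms(1)] assms(7))
qed

lemma hilbert_setdist_signed_hyperplane_le_diff:
  fixes x a :: "nat \<Rightarrow> ereal"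
  assumes "I \<union> J = {1..n}" "I \<inter> J = {}" "I \<noteq> {}"
    and "x \<in> tpoints n" "\<not> is_bot n x"
    and p: "Max ((\<lambda>i. x i + a i) ` I) = ereal p"
    and q: "Max ((\<lambda>j. x j + a j) ` J) = ereal q"
    and "q \<le> p"
  shows "hilbert_setdist n x (signed_hyperplane n I J a) \<le> ereal (p - q)"
proof -
  have "finite I" using assms(1) by (metis finite_Un finite_atLeastAtMost)
  define y where "y l = (if l \<in> I then x l + ereal (q - p) else x l)" for l
  have "Max ((\<lambda>i. a i + y i) ` I) = Max ((\<lambda>i. ereal (q - p) + (x i + a i)) ` I)"
    unfolding y_def by (intro arg_cong[where f=Max] image_cong) (auto simp: ac_simps)
  also have "\<dots> = ereal q"
    using \<open>finite I\<close> assms(3) p by (simp add: Max_image_add_ereal)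
  also have "\<dots> = Max ((\<lambda>j. a j + y j) ` J)"
    unfolding q[symmetric] y_def using assms(2)
    by (intro arg_cong[where f=Max] image_cong) (auto simp: ac_simps)
  finally have y_on: "y \<in> signed_hyperplane n I J a"
    using assms(4) unfolding signed_hyperplane_def tpoints_def y_def by auto
  have "\<forall>l\<in>{1..n}. ereal 0 + y l \<le> x l \<and> x l \<le> ereal (p - q) + y l"
  proof
    fix l assume "l \<in> {1..n}"
    then show "ereal 0 + y l \<le> x l \<and> x l \<le> ereal (p - q) + y l"
      using assms(4,8) unfolding y_def tpoints_def by (cases "x l") auto
  qed
  then have "hilbert_dist n x y \<le> ereal (p - q - 0)" by (rule hilbert_dist_le[OF assms(5)])
  with y_on show ?thesis unfolding hilbert_setdist_def by (auto intro: INF_lower2)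
qed

lemma hilbert_setdist_signed_hyperplane_le:
  fixes x a :: "nat \<Rightarrow> ereal"
  assumes "I \<union> J = {1..n}" "I \<inter> J = {}" "I \<noteq> {}" "J \<noteq> {}"
    and "x \<in> tpoints n" "\<not> is_bot n x"
    and p: "Max ((\<lambda>i. x i + a i) ` I) = ereal p"
    and q: "Max ((\<lambda>j. x j + a j) ` J) = ereal q"
  shows "hilbert_setdist n x (signed_hyperplane n I J a) \<le> ereal \<bar>p - q\<bar>"
proof (cases "q \<le> p")
  case True
  then show ?thesis using hilbert_setdist_signed_hyperplane_le_diff[OF assms(1-3,5-8)] by simp
next
  case False
  have "J \<union> I = {1..n}" "J \<inter> I = {}" using assms(1,2) by auto
  from hilbert_setdist_signed_hyperplane_le_diff[OF this assms(4-6) q p] False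
  show ?thesis by (simp add: signed_hyperplane_swap[of n J])
qed

theorem proposition5p3:
  fixes n :: nat and I J :: "nat set" and x a :: "nat \<Rightarrow> ereal"
  assumes "I \<noteq> {}" and "J \<noteq> {}"
    and "I \<union> J = {1..n}" and "I \<inter> J = {}"
    and "x \<in> tpoints n" and "a \<in> tpoints n"
    and "\<not> is_bot n x" and "\<not> is_bot n a"
  shows "(\<bar>Max ((\<lambda>i. x i + a i) ` I)\<bar> \<noteq> \<infinity> \<or> \<bar>Max ((\<lambda>j. x j + a j) ` J)\<bar> \<noteq> \<infinity>
           \<longrightarrow> hilbert_setdist n x (signed_hyperplane n I J a)
               = \<bar>Max ((\<lambda>i. x i + a i) ` I) - Max ((\<lambda>j. x j + a j) ` J)\<bar>)
       \<and> (\<bar>Max ((\<lambda>i. x i + a i) ` I)\<bar> = \<infinity> \<and> \<bar>Max ((\<lambda>j. x j + a j) ` J)\<bar> = \<infinity>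
           \<longrightarrow> hilbert_setdist n x (signed_hyperplane n I J a) = 0)"
proof -
  let ?MI = "Max ((\<lambda>i. x i + a i) ` I)" and ?MJ = "Max ((\<lambda>j. x j + a j) ` J)"
  let ?H = "signed_hyperplane n I J a"
  have "I \<subseteq> {1..n}" "J \<subseteq> {1..n}" using assms(3) by blast+
  then have "?MI \<noteq> \<infinity>" "?MJ \<noteq> \<infinity>"
    using Max_add_tpoints_neq_PInfty[OF assms(5,6)] assms(1,2) by simp_all
  moreover have "hilbert_setdist n x ?H \<le> \<bar>?MI - ?MJ\<bar>" if "?MI = ereal p" "?MJ = ereal q" for p q
    using hilbert_setdist_signed_hyperplane_le[OF assms(3,4,1,2,5,7) that] that by simp
  moreover have "hilbert_setdist n x ?H = 0" if "?MI = -\<infinity>" "?MJ = -\<infinity>"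
    using that assms(5) unfolding signed_hyperplane_def
    by (intro hilbert_setdist_eq_0_of_mem assms(5,7)) (simp add: add.commute)
  ultimately show ?thesis
    using hilbert_setdist_signed_hyperplane_ge[OF assms(1-3,5-7)]
    by (cases ?MI; cases ?MJ) (auto intro: antisym)
qed

end
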